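(* If a structure $M$ simply interprets a structure $N$ over $\emptyset$ and $\mathrm{Th}(M)$ is dp-small, then $\mathrm{Th}(N)$ is dp-small.
   Context: Let $M$, $N$ be structures in possibly different languages. For $A\subseteq M$, $M$ simply interprets $N$ over $A$ if there are an $A$-definable set $S\subseteq M$ (a subset of the home sort, i.e. of $M$ itself) and an $A$-definable equivalence relation $E\subseteq M\times M$ on $S$ such that the elements of $N$ are in bijection with $S/E$ and the relations on $S$ induced via this bijection by the relations and functions of $N$ are $A$-definable in $M$. For a complete theory $T$ in language $L$ with monster model $\mathcal{U}$ ($\mathcal{U}_y$ the $|y|$-tuples from $\mathcal{U}$): a partial type $\pi(x)$ is dp-small if there do not exist $L(\mathcal{U})$-formulas $\varphi_i(x)$ ($i<\omega$), an $L$-formula $\psi(x;y)$ and $b_j\in\mathcal{U}_y$ ($j<\omega$) such that for all $i_0,j_0<\omega$ the type $\pi(x)\cup\{\varphi_{i_0}(x),\psi(x;b_{j_0})\}\cup\{\neg\varphi_i(x): i\ne i_0\}\cup\{\neg\psi(x;b_j): j\neq j_0\}$ is consistent. $T$ is dp-small if $x=x$ is dp-small for $x$ a single variable. *)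

theory Defs
  imports Main
begin

datatype 'f trm = Var nat | Fn 'f "'f trm list"

datatype ('f, 'r) fm =
    Eq "'f trm" "'f trm"
  | Rel 'r "'f trm list"
  | Neg "('f, 'r) fm"
  | Conj "('f, 'r) fm" "('f, 'r) fm"
  | Ex nat "('f, 'r) fm"

text \<open>A language is given by the arities of its function symbols (constants
  are 0-ary functions) and of its relation symbols.\<close>
type_synonym ('f, 'r) lang = "('f \<Rightarrow> nat) \<times> ('r \<Rightarrow> nat)"

type_synonym ('f, 'r, 'a) struc = "('f \<Rightarrow> 'a list \<Rightarrow> 'a) \<times> ('r \<Rightarrow> 'a list \<Rightarrow> bool)"

fun wf_trm :: "('f \<Rightarrow> nat) \<Rightarrow> 'f trm \<Rightarrow> bool" where
  "wf_trm ar (Var n) = True"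
| "wf_trm ar (Fn f ts) = (length ts = ar f \<and> (\<forall>t\<in>set ts. wf_trm ar t))"

fun wf_fm :: "('f, 'r) lang \<Rightarrow> ('f, 'r) fm \<Rightarrow> bool" where
  "wf_fm L (Eq s t) = (wf_trm (fst L) s \<and> wf_trm (fst L) t)"
| "wf_fm L (Rel r ts) = (length ts = snd L r \<and> (\<forall>t\<in>set ts. wf_trm (fst L) t))"
| "wf_fm L (Neg p) = wf_fm L p"
| "wf_fm L (Conj p q) = (wf_fm L p \<and> wf_fm L q)"
| "wf_fm L (Ex n p) = wf_fm L p"

fun fv_trm :: "'f trm \<Rightarrow> nat set" where
  "fv_trm (Var n) = {n}"
| "fv_trm (Fn f ts) = (\<Union>t\<in>set ts. fv_trm t)"

fun fv_fm :: "('f, 'r) fm \<Rightarrow> nat set" where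
  "fv_fm (Eq s t) = fv_trm s \<union> fv_trm t"
| "fv_fm (Rel r ts) = (\<Union>t\<in>set ts. fv_trm t)"
| "fv_fm (Neg p) = fv_fm p"
| "fv_fm (Conj p q) = fv_fm p \<union> fv_fm q"
| "fv_fm (Ex n p) = fv_fm p - {n}"

fun eval_trm :: "('f \<Rightarrow> 'a list \<Rightarrow> 'a) \<Rightarrow> (nat \<Rightarrow> 'a) \<Rightarrow> 'f trm \<Rightarrow> 'a" where
  "eval_trm F e (Var n) = e n"
| "eval_trm F e (Fn f ts) = F f (map (eval_trm F e) ts)"

fun sat :: "('f, 'r, 'a) struc \<Rightarrow> (nat \<Rightarrow> 'a) \<Rightarrow> ('f, 'r) fm \<Rightarrow> bool" where
  "sat M e (Eq s t) = (eval_trm (fst M) e s = eval_trm (fst M) e t)"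
| "sat M e (Rel r ts) = snd M r (map (eval_trm (fst M) e) ts)"
| "sat M e (Neg p) = (\<not> sat M e p)"
| "sat M e (Conj p q) = (sat M e p \<and> sat M e q)"
| "sat M e (Ex n p) = (\<exists>a. sat M (e(n := a)) p)"

text \<open>A set X of k-tuples (lists of length k) is \<emptyset>-definable in M (language L)
  if it is defined by an L-formula without parameters whose free variables
  are among 0, ..., k-1 (variable i standing for the i-th coordinate).\<close>
definition definable0 :: "('f, 'r) lang \<Rightarrow> ('f, 'r, 'a) struc \<Rightarrow> nat \<Rightarrow> 'a list set \<Rightarrow> bool" where
  "definable0 L M k X \<longleftrightarrow>
     (\<exists>\<phi>. wf_fm L \<phi> \<and> fv_fm \<phi> \<subseteq> {..<k} \<and>
          X = {as. length as = k \<and> sat M (\<lambda>i. as ! i) \<phi>})"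

text \<open>M (language LM, universe 'a) simply interprets N (language LN, universe 'b)
  over \<emptyset>: an \<emptyset>-definable S \<subseteq> M, an \<emptyset>-definable equivalence relation E on S,
  a bijection h : S/E \<rightarrow> N, such that the pull-backs along s \<mapsto> h([s]_E) of all
  relations of N and of the graphs of all functions of N are \<emptyset>-definable in M.\<close>
definition simply_interprets0 ::
  "('f, 'r) lang \<Rightarrow> ('f, 'r, 'a) struc \<Rightarrow> ('g, 's) lang \<Rightarrow> ('g, 's, 'b) struc \<Rightarrow> bool" where
  "simply_interprets0 LM M LN N \<longleftrightarrow>
     (\<exists>S E h.
        definable0 LM M 1 {[s] | s. s \<in> S} \<and>
        equiv S E \<and>
        definable0 LM M 2 {[s, t] | s t. (s, t) \<in> E} \<and>
        bij_betw h (S // E) (UNIV :: 'b set) \<and>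
        (\<forall>R. definable0 LM M (snd LN R)
               {ss. length ss = snd LN R \<and> set ss \<subseteq> S \<and>
                    snd N R (map (\<lambda>s. h (E `` {s})) ss)}) \<and>
        (\<forall>f. definable0 LM M (Suc (fst LN f))
               {ss @ [t] | ss t. length ss = fst LN f \<and> set ss \<subseteq> S \<and> t \<in> S \<and>
                    h (E `` {t}) = fst N f (map (\<lambda>s. h (E `` {s})) ss)}))"

text \<open>Variable 0 plays the role of the single variable x.
  The L(U)-formulas \<phi>_i(x) are given by L-formulas \<theta> i evaluated under a common
  parameter assignment c (their variables other than 0 are parameters);
  \<psi>(x;y) is an L-formula whose variables other than 0 form y, and b_j is given by
  the assignment b j. Consistency with Th(M) in the monster model is expressed,
  via compactness, as finite satisfiability in M of the set of conditions
  "\<exists>x. \<phi>_{i0}(x) \<and> \<psi>(x;b_{j0}) \<and> \<And>_{i\<in>I-{i0}} \<not>\<phi>_i(x) \<and> \<And>_{j\<in>J-{j0}} \<not>\<psi>(x;b_j)"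
  (I, J finite) in the parameter variables.\<close>
definition dp_small :: "('f, 'r) lang \<Rightarrow> ('f, 'r, 'a) struc \<Rightarrow> bool" where
  "dp_small L M \<longleftrightarrow>
     \<not> (\<exists>(\<theta> :: nat \<Rightarrow> ('f, 'r) fm) (\<psi> :: ('f, 'r) fm).
          (\<forall>i. wf_fm L (\<theta> i)) \<and> wf_fm L \<psi> \<and>
          (\<forall>F :: (nat \<times> nat \<times> nat set \<times> nat set) set.
             finite F \<and> (\<forall>(i0, j0, I, J) \<in> F. finite I \<and> finite J) \<longrightarrow>
             (\<exists>(c :: nat \<Rightarrow> 'a) (b :: nat \<Rightarrow> nat \<Rightarrow> 'a).
                \<forall>(i0, j0, I, J) \<in> F. \<exists>a.
                   sat M (c(0 := a)) (\<theta> i0) \<and> sat M ((b j0)(0 := a)) \<psi> \<and>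
                   (\<forall>i \<in> I - {i0}. \<not> sat M (c(0 := a)) (\<theta> i)) \<and>
                   (\<forall>j \<in> J - {j0}. \<not> sat M ((b j)(0 := a)) \<psi>))))"

end

theory Submission
  imports Defs
begin

text \<open>Every formula \<open>\<phi>\<close> of \<open>N\<close> translates into a formula \<open>\<phi>*\<close> of \<open>M\<close> such that, for tuples
  \<open>s\<close> from \<open>S\<close>, \<open>\<phi>*(s)\<close> holds iff \<open>\<phi>\<close> holds of the classes of \<open>s\<close>: equality becomes \<open>E\<close>,
  relations and graphs of functions become their defining formulas, nested terms are unfolded
  with existentially quantified intermediate values, and quantifiers are relativised to \<open>S\<close>.
  Choosing a representative \<open>code b \<in> S\<close> for every \<open>b \<in> N\<close>, a configuration of formulas
  \<open>\<theta>\<^sub>i(x)\<close>, \<open>\<psi>(x; b\<^sub>j)\<close> witnessing that \<open>N\<close> is not dp-small is carried over to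
  \<open>\<theta>\<^sub>i*\<close>, \<open>\<psi>*\<close> in \<open>M\<close> with parameters and realisations replaced by their codes.\<close>

lemma eval_trm_cong: "\<forall>x\<in>fv_trm t. e x = e' x \<Longrightarrow> eval_trm F e t = eval_trm F e' t"
proof (induction t)
  case (Fn f ts)
  then have "map (eval_trm F e) ts = map (eval_trm F e') ts" by (intro map_cong) auto
  then show ?case by (simp only: eval_trm.simps)
qed simp

lemma sat_cong: "\<forall>x\<in>fv_fm p. e x = e' x \<Longrightarrow> sat M e p = sat M e' p"
proof (induction p arbitrary: e e')
  case (Eq s t)
  then show ?case using eval_trm_cong[of s e e'] eval_trm_cong[of t e e'] by auto
next
  case (Rel r ts)
  then have "map (eval_trm (fst M) e) ts = map (eval_trm (fst M) e') ts"
    by (intro map_cong refl eval_trm_cong) auto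
  then show ?case by (simp only: sat.simps)
next
  case (Ex n p)
  then have "sat M (e(n := a)) p = sat M (e'(n := a)) p" for a by (intro Ex.IH) auto
  then show ?case by simp
next
  case (Conj p q)
  have "sat M e p = sat M e' p" "sat M e q = sat M e' q"
    using Conj.IH Conj.prems by auto
  then show ?case by simp
qed auto

lemma finite_fv_trm: "finite (fv_trm t)"
  by (induction t) auto

lemma finite_fv_fm: "finite (fv_fm p)"
  by (induction p) (auto simp: finite_fv_trm)

fun rename_trm :: "(nat \<Rightarrow> nat) \<Rightarrow> 'f trm \<Rightarrow> 'f trm" where
  "rename_trm \<rho> (Var n) = Var (\<rho> n)"
| "rename_trm \<rho> (Fn f ts) = Fn f (map (rename_trm \<rho>) ts)"

lemma eval_rename_trm: "eval_trm F e (rename_trm \<rho> t) = eval_trm F (\<lambda>x. e (\<rho> x)) t"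
proof (induction t)
  case (Fn f ts)
  then have "map (eval_trm F e \<circ> rename_trm \<rho>) ts = map (eval_trm F (\<lambda>x. e (\<rho> x))) ts" by auto
  then show ?case by (simp only: eval_trm.simps rename_trm.simps map_map)
qed simp

lemma wf_rename_trm: "wf_trm ar (rename_trm \<rho> t) = wf_trm ar t"
  by (induction t) auto

text \<open>Renaming a formula needs fresh bound variables, so it is only shown to exist.\<close>
lemma ex_renamed_fm:
  "wf_fm L \<phi> \<Longrightarrow> \<exists>\<phi>'. wf_fm L \<phi>' \<and> (\<forall>e. sat M e \<phi>' = sat M (\<lambda>x. e (\<rho> x)) \<phi>)"
proof (induction \<phi> arbitrary: \<rho>)
  case (Eq s t)
  show ?case
    by (rule exI[of _ "Eq (rename_trm \<rho> s) (rename_trm \<rho> t)"])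
      (use Eq in \<open>auto simp: eval_rename_trm wf_rename_trm\<close>)
next
  case (Rel r ts)
  show ?case
    by (rule exI[of _ "Rel r (map (rename_trm \<rho>) ts)"])
      (use Rel in \<open>auto simp: eval_rename_trm wf_rename_trm o_def\<close>)
next
  case (Neg p)
  then obtain p' where "wf_fm L p'" "\<forall>e. sat M e p' = sat M (\<lambda>x. e (\<rho> x)) p" by fastforce
  then show ?case by (intro exI[of _ "Neg p'"]) auto
next
  case (Conj p q)
  obtain p' where "wf_fm L p'" "\<forall>e. sat M e p' = sat M (\<lambda>x. e (\<rho> x)) p"
    using Conj by fastforce
  moreover obtain q' where "wf_fm L q'" "\<forall>e. sat M e q' = sat M (\<lambda>x. e (\<rho> x)) q"
    using Conj by fastforce
  ultimately show ?case by (intro exI[of _ "Conj p' q'"]) auto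
next
  case (Ex n p)
  have "finite (\<rho> ` (fv_fm p - {n}))" by (simp add: finite_fv_fm)
  then obtain m where m: "m \<notin> \<rho> ` (fv_fm p - {n})"
    using ex_new_if_finite infinite_UNIV_nat by blast
  from Ex obtain p' where p': "wf_fm L p'" "\<forall>e. sat M e p' = sat M (\<lambda>x. e ((\<rho>(n := m)) x)) p"
    by fastforce
  have "sat M (\<lambda>x. (e(m := a)) ((\<rho>(n := m)) x)) p = sat M ((\<lambda>x. e (\<rho> x))(n := a)) p" for e a
    by (rule sat_cong) (use m in auto)
  then show ?case using p' by (intro exI[of _ "Ex m p'"]) auto
qed

text \<open>Only assignments into \<open>S\<close> are constrained; with \<open>S = UNIV\<close> this is ordinary definability.\<close>
definition definable_on ::
  "('f, 'r) lang \<Rightarrow> ('f, 'r, 'a) struc \<Rightarrow> 'a set \<Rightarrow> ((nat \<Rightarrow> 'a) \<Rightarrow> bool) \<Rightarrow> bool" where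
  "definable_on L M S P \<longleftrightarrow> (\<exists>\<phi>. wf_fm L \<phi> \<and> (\<forall>e. range e \<subseteq> S \<longrightarrow> sat M e \<phi> = P e))"

lemma definable_on_cong:
  "definable_on L M S P \<Longrightarrow> (\<And>e. range e \<subseteq> S \<Longrightarrow> P e = Q e) \<Longrightarrow> definable_on L M S Q"
  unfolding definable_on_def by metis

lemma definable_on_rename:
  assumes "definable_on L M S P"
  shows "definable_on L M S (\<lambda>e. P (\<lambda>x. e (\<rho> x)))"
proof -
  obtain \<phi> where \<phi>: "wf_fm L \<phi>" "\<forall>e. range e \<subseteq> S \<longrightarrow> sat M e \<phi> = P e"
    using assms unfolding definable_on_def by blast
  obtain \<phi>' where "wf_fm L \<phi>'" and \<phi>': "\<forall>e. sat M e \<phi>' = sat M (\<lambda>x. e (\<rho> x)) \<phi>"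
    using ex_renamed_fm[OF \<phi>(1)] by blast
  moreover have "sat M e \<phi>' = P (\<lambda>x. e (\<rho> x))" if "range e \<subseteq> S" for e
    using \<phi>(2) \<phi>' that by (auto simp: image_subset_iff)
  ultimately show ?thesis
    unfolding definable_on_def by blast
qed

lemma definable_on_Not: "definable_on L M S P \<Longrightarrow> definable_on L M S (\<lambda>e. \<not> P e)"
  unfolding definable_on_def by (metis sat.simps(3) wf_fm.simps(3))

lemma definable_on_conj:
  "definable_on L M S P \<Longrightarrow> definable_on L M S Q \<Longrightarrow> definable_on L M S (\<lambda>e. P e \<and> Q e)"
  unfolding definable_on_def by (metis sat.simps(4) wf_fm.simps(4))

lemma definable_on_True: "definable_on L M S (\<lambda>e. True)"
  unfolding definable_on_def by (rule exI[of _ "Eq (Var 0) (Var 0)"]) simp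

lemma definable_on_all_less:
  "(\<And>i. i < (k::nat) \<Longrightarrow> definable_on L M S (P i)) \<Longrightarrow> definable_on L M S (\<lambda>e. \<forall>i<k. P i e)"
proof (induction k)
  case 0
  show ?case by (simp add: definable_on_True)
next
  case (Suc k)
  then have "definable_on L M S (\<lambda>e. (\<forall>i<k. P i e) \<and> P k e)"
    by (intro definable_on_conj) auto
  moreover have "(\<forall>i<Suc k. P i e) = ((\<forall>i<k. P i e) \<and> P k e)" for e
    by (auto simp: less_Suc_eq)
  ultimately show ?case by simp
qed

lemma definable_on_ex:
  assumes "definable_on L M UNIV (\<lambda>e. e n \<in> S)" and "definable_on L M S P"
  shows "definable_on L M S (\<lambda>e. \<exists>a\<in>S. P (e(n := a)))"
proof -
  obtain \<sigma> where \<sigma>: "wf_fm L \<sigma>" "\<forall>e. sat M e \<sigma> = (e n \<in> S)"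
    using assms(1) unfolding definable_on_def by auto
  obtain \<phi> where \<phi>: "wf_fm L \<phi>" "\<forall>e. range e \<subseteq> S \<longrightarrow> sat M e \<phi> = P e"
    using assms(2) unfolding definable_on_def by blast
  have "sat M e (Ex n (Conj \<sigma> \<phi>)) = (\<exists>a\<in>S. P (e(n := a)))" if "range e \<subseteq> S" for e
    using \<sigma>(2) \<phi>(2) that by (auto simp: image_subset_iff)
  with \<sigma>(1) \<phi>(1) show ?thesis
    unfolding definable_on_def by (intro exI[of _ "Ex n (Conj \<sigma> \<phi>)"]) simp
qed

lemma definable0_imp_definable_on:
  assumes "definable0 L M k X" and "length vs = k"
  shows "definable_on L M S (\<lambda>e. map e vs \<in> X)"
proof -
  obtain \<phi> where \<phi>: "wf_fm L \<phi>" "fv_fm \<phi> \<subseteq> {..<k}"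
    and X: "X = {as. length as = k \<and> sat M (\<lambda>i. as ! i) \<phi>}"
    using assms(1) unfolding definable0_def by blast
  have "sat M e \<phi> = sat M (\<lambda>i. map e [0..<k] ! i) \<phi>" for e
    by (rule sat_cong) (use \<phi>(2) in auto)
  then have "definable_on L M S (\<lambda>e. map e [0..<k] \<in> X)"
    unfolding definable_on_def X using \<phi>(1) by auto
  from definable_on_rename[OF this, of "\<lambda>i. vs ! i"]
  have "definable_on L M S (\<lambda>e. map (\<lambda>i. e (vs ! i)) [0..<k] \<in> X)" .
  moreover have reindex: "map (\<lambda>i. e (vs ! i)) [0..<k] = map e vs" for e
    using assms(2) by (auto intro: nth_equalityI)
  ultimately show ?thesis by (simp only: reindex)
qed

lemma definable_on_ex_list:
  assumes S: "definable_on L M UNIV (\<lambda>e. e 0 \<in> S)"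
    and "definable_on L M S (\<lambda>e. P (map e [0..<k]) (\<lambda>x. e (x + k)))"
  shows "definable_on L M S (\<lambda>e. \<exists>as. length as = k \<and> set as \<subseteq> S \<and> P as e)"
  using assms(2)
proof (induction k arbitrary: P)
  case 0
  then show ?case by simp
next
  case (Suc k)
  from Suc.prems have "definable_on L M S
      (\<lambda>e. P (e 0 # map (\<lambda>x. e (Suc x)) [0..<k]) (\<lambda>x. e (Suc (x + k))))"
    by (simp only: map_upt_Suc add_Suc_right)
  from definable_on_ex[OF S this]
  have "definable_on L M S (\<lambda>e. \<exists>a\<in>S. P (a # map (\<lambda>x. e (Suc x)) [0..<k]) (\<lambda>x. e (Suc (x + k))))"
    by simp
  from definable_on_rename[OF this, of "\<lambda>x. x - 1"]
  have "definable_on L M S (\<lambda>e. \<exists>a\<in>S. P (a # map e [0..<k]) (\<lambda>x. e (x + k)))"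
    by simp
  from Suc.IH[OF this]
  show ?case by (rule definable_on_cong) (force simp: length_Suc_conv)
qed

lemma definable_on_ex_tuple:
  fixes M :: "('f, 'r, 'a) struc"
  assumes S: "definable_on L M UNIV (\<lambda>e. e 0 \<in> S)"
    and T: "\<And>i. i < k \<Longrightarrow> definable_on L M S (T i)"
    and X: "definable0 L M (k + length vs) X"
  shows "definable_on L M S (\<lambda>e. \<exists>as. length as = k \<and> set as \<subseteq> S \<and>
           as @ map e vs \<in> X \<and> (\<forall>i<k. T i (case_nat (as ! i) e)))"
proof (rule definable_on_ex_list[OF S])
  have shift: "(\<lambda>x. e (case_nat i (\<lambda>y. y + k) x)) = case_nat (e i) (\<lambda>x. e (x + k))"
    for e :: "nat \<Rightarrow> 'a" and i
    by (auto split: nat.split)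
  have "definable_on L M S (\<lambda>e. map e ([0..<k] @ map (\<lambda>x. x + k) vs) \<in> X)"
    using X by (rule definable0_imp_definable_on) simp
  moreover have "definable_on L M S (\<lambda>e. \<forall>i<k. T i (case_nat (e i) (\<lambda>x. e (x + k))))"
  proof (rule definable_on_all_less)
    fix i assume "i < k"
    from definable_on_rename[OF T[OF this], of "case_nat i (\<lambda>y. y + k)"]
    show "definable_on L M S (\<lambda>e. T i (case_nat (e i) (\<lambda>x. e (x + k))))"
      by (simp only: shift)
  qed
  ultimately show "definable_on L M S (\<lambda>e. map e [0..<k] @ map (\<lambda>x. e (x + k)) vs \<in> X \<and>
      (\<forall>i<k. T i (case_nat (map e [0..<k] ! i) (\<lambda>x. e (x + k)))))"
    by (rule definable_on_cong[OF definable_on_conj]) (simp_all add: o_def)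
qed

locale simple_interpretation =
  fixes LM :: "('f, 'r) lang" and M :: "('f, 'r, 'a) struc"
    and LN :: "('g, 's) lang" and N :: "('g, 's, 'b) struc"
    and S :: "'a set" and E :: "('a \<times> 'a) set" and h :: "'a set \<Rightarrow> 'b"
  assumes S_definable: "definable0 LM M 1 {[s] | s. s \<in> S}"
    and equiv_E: "equiv S E"
    and E_definable: "definable0 LM M 2 {[s, t] | s t. (s, t) \<in> E}"
    and bij_h: "bij_betw h (S // E) (UNIV :: 'b set)"
    and rel_definable: "\<And>R. definable0 LM M (snd LN R)
          {ss. length ss = snd LN R \<and> set ss \<subseteq> S \<and> snd N R (map (\<lambda>s. h (E `` {s})) ss)}"
    and fun_definable: "\<And>f. definable0 LM M (Suc (fst LN f))
          {ss @ [t] | ss t. length ss = fst LN f \<and> set ss \<subseteq> S \<and> t \<in> S \<and>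
             h (E `` {t}) = fst N f (map (\<lambda>s. h (E `` {s})) ss)}"
begin

abbreviation decode :: "'a \<Rightarrow> 'b" where
  "decode s \<equiv> h (E `` {s})"

lemma decode_surj: "\<exists>s\<in>S. decode s = b"
proof -
  obtain C where "C \<in> S // E" "h C = b"
    using bij_h by (metis UNIV_I bij_betw_def imageE)
  then show ?thesis by (auto elim: quotientE)
qed

definition code :: "'b \<Rightarrow> 'a" where
  "code b = (SOME s. s \<in> S \<and> decode s = b)"

lemma code_in_S: "code b \<in> S" and decode_code: "decode (code b) = b"
  using someI_ex[OF decode_surj[of b, unfolded Bex_def]] unfolding code_def by auto

lemma decode_eq_iff: "s \<in> S \<Longrightarrow> t \<in> S \<Longrightarrow> decode s = decode t \<longleftrightarrow> (s, t) \<in> E"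
proof -
  assume "s \<in> S" "t \<in> S"
  then have "E `` {s} \<in> S // E" "E `` {t} \<in> S // E" by (auto intro: quotientI)
  with bij_h have "decode s = decode t \<longleftrightarrow> E `` {s} = E `` {t}"
    by (auto simp: bij_betw_def dest: inj_onD)
  also have "\<dots> \<longleftrightarrow> (s, t) \<in> E"
    using equiv_E \<open>s \<in> S\<close> \<open>t \<in> S\<close> by (simp add: equiv_class_eq_iff)
  finally show ?thesis .
qed

lemma definable_on_in_S: "definable_on LM M UNIV (\<lambda>e. e n \<in> S)"
  using definable0_imp_definable_on[OF S_definable, of "[n]"] by simp

lemma definable_on_decode_relation:
  assumes graphs: "\<And>t. t \<in> set ts \<Longrightarrow>
      definable_on LM M S (\<lambda>e. decode (e 0) = eval_trm (fst N) (\<lambda>x. decode (e (Suc x))) t)"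
    and X: "definable0 LM M (length ts + length vs) X"
    and XR: "\<And>as e. length as = length ts \<Longrightarrow> set as \<subseteq> S \<Longrightarrow> range e \<subseteq> S \<Longrightarrow>
      as @ map e vs \<in> X \<longleftrightarrow> R (map decode as) e"
  shows "definable_on LM M S (\<lambda>e. R (map (eval_trm (fst N) (\<lambda>x. decode (e x))) ts) e)"
proof -
  let ?k = "length ts"
  have "definable_on LM M S (\<lambda>e. \<exists>as. length as = ?k \<and> set as \<subseteq> S \<and> as @ map e vs \<in> X \<and>
      (\<forall>i<?k. decode (case_nat (as ! i) e 0) =
                eval_trm (fst N) (\<lambda>x. decode (case_nat (as ! i) e (Suc x))) (ts ! i)))"
    by (rule definable_on_ex_tuple[OF definable_on_in_S graphs[OF nth_mem] X])
  then show ?thesis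
  proof (rule definable_on_cong)
    fix e :: "nat \<Rightarrow> 'a" assume e: "range e \<subseteq> S"
    let ?ev = "eval_trm (fst N) (\<lambda>x. decode (e x))"
    have "(\<exists>as. length as = ?k \<and> set as \<subseteq> S \<and> as @ map e vs \<in> X \<and>
             (\<forall>i<?k. decode (as ! i) = ?ev (ts ! i))) \<longleftrightarrow>
          (\<exists>as. length as = ?k \<and> set as \<subseteq> S \<and> R (map decode as) e \<and> map decode as = map ?ev ts)"
      using XR e by (auto simp: list_eq_iff_nth_eq)
    also have "\<dots> \<longleftrightarrow> R (map ?ev ts) e"
    proof
      assume "R (map ?ev ts) e"
      then show "\<exists>as. length as = ?k \<and> set as \<subseteq> S \<and> R (map decode as) e \<and> map decode as = map ?ev ts"
        by (intro exI[of _ "map (\<lambda>t. code (?ev t)) ts"]) (auto simp: code_in_S decode_code comp_def)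
    qed auto
    finally show "(\<exists>as. length as = ?k \<and> set as \<subseteq> S \<and> as @ map e vs \<in> X \<and>
        (\<forall>i<?k. decode (case_nat (as ! i) e 0) =
                  eval_trm (fst N) (\<lambda>x. decode (case_nat (as ! i) e (Suc x))) (ts ! i))) =
        R (map ?ev ts) e"
      by simp
  qed
qed

text \<open>Variable 0 holds the value of \<open>t\<close>; the variables of \<open>t\<close> are shifted up by one.\<close>
lemma definable_on_term_graph:
  "wf_trm (fst LN) t \<Longrightarrow>
     definable_on LM M S (\<lambda>e. decode (e 0) = eval_trm (fst N) (\<lambda>x. decode (e (Suc x))) t)"
proof (induction t)
  case (Var n)
  have "definable_on LM M S (\<lambda>e. map e [0, Suc n] \<in> {[s, t] | s t. (s, t) \<in> E})"
    by (rule definable0_imp_definable_on[OF E_definable]) simp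
  then show ?case
    by (rule definable_on_cong) (auto simp: decode_eq_iff image_subset_iff)
next
  case (Fn f ts)
  have arity: "length ts = fst LN f" and "\<forall>t\<in>set ts. wf_trm (fst LN) t"
    using Fn.prems by auto
  \<comment> \<open>shifting the arguments frees variable 0 for the value of \<open>Fn f ts\<close>\<close>
  let ?ts = "map (rename_trm Suc) ts"
  have "definable_on LM M S (\<lambda>e. decode (e 0) = eval_trm (fst N) (\<lambda>x. decode (e (Suc x))) t)"
    if t: "t \<in> set ?ts" for t
  proof -
    obtain u where u: "u \<in> set ts" "t = rename_trm Suc u" using t by auto
    from definable_on_rename[OF Fn.IH[OF u(1)], of "case_nat 0 (\<lambda>x. Suc (Suc x))"]
    show ?thesis using \<open>\<forall>t\<in>set ts. _\<close> u by (simp add: eval_rename_trm)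
  qed
  moreover have "definable0 LM M (length ?ts + length [0]) {ss @ [t] | ss t. length ss = fst LN f \<and>
      set ss \<subseteq> S \<and> t \<in> S \<and> decode t = fst N f (map decode ss)}"
    using fun_definable[of f] arity by simp
  ultimately have "definable_on LM M S
      (\<lambda>e. decode (e 0) = fst N f (map (eval_trm (fst N) (\<lambda>x. decode (e x))) ?ts))"
    by (rule definable_on_decode_relation) (auto simp: arity image_subset_iff)
  then show ?case by (simp add: eval_rename_trm comp_def)
qed

lemma definable_on_sat:
  "wf_fm LN \<phi> \<Longrightarrow> definable_on LM M S (\<lambda>e. sat N (\<lambda>x. decode (e x)) \<phi>)"
proof (induction \<phi>)
  case (Eq s t)
  have "definable_on LM M S (\<lambda>e. map (eval_trm (fst N) (\<lambda>x. decode (e x))) [s, t] ! 0 =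
      map (eval_trm (fst N) (\<lambda>x. decode (e x))) [s, t] ! 1)"
  proof (rule definable_on_decode_relation[where vs = "[]" and R = "\<lambda>bs e. bs ! 0 = bs ! 1"])
    show "definable0 LM M (length [s, t] + length []) {[s, t] | s t. (s, t) \<in> E}"
      using E_definable by (simp add: numeral_2_eq_2)
  next
    fix as :: "'a list" and e :: "nat \<Rightarrow> 'a"
    assume "length as = length [s, t]" "set as \<subseteq> S"
    then show "as @ map e [] \<in> {[s, t] | s t. (s, t) \<in> E} \<longleftrightarrow> map decode as ! 0 = map decode as ! 1"
      by (auto simp: length_Suc_conv decode_eq_iff)
  qed (use Eq.prems definable_on_term_graph in auto)
  then show ?case by simp
next
  case (Rel R ts)
  have "definable_on LM M S (\<lambda>e. snd N R (map (eval_trm (fst N) (\<lambda>x. decode (e x))) ts))"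
  proof (rule definable_on_decode_relation[where vs = "[]" and R = "\<lambda>bs e. snd N R bs"])
    show "definable0 LM M (length ts + length [])
        {ss. length ss = snd LN R \<and> set ss \<subseteq> S \<and> snd N R (map decode ss)}"
      using rel_definable[of R] Rel.prems by simp
  qed (use Rel.prems definable_on_term_graph in auto)
  then show ?case by simp
next
  case (Neg p)
  then show ?case by (simp add: definable_on_Not)
next
  case (Conj p q)
  then show ?case by (simp add: definable_on_conj)
next
  case (Ex n p)
  then have "definable_on LM M S (\<lambda>e. \<exists>a\<in>S. sat N (\<lambda>x. decode ((e(n := a)) x)) p)"
    by (intro definable_on_ex definable_on_in_S) simp
  then show ?case
  proof (rule definable_on_cong)
    fix e :: "nat \<Rightarrow> 'a"
    have "(\<lambda>x. decode ((e(n := a)) x)) = (\<lambda>x. decode (e x))(n := decode a)" for a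
      by auto
    then show "(\<exists>a\<in>S. sat N (\<lambda>x. decode ((e(n := a)) x)) p) = sat N (\<lambda>x. decode (e x)) (Ex n p)"
      using code_in_S decode_code by (auto simp del: fun_upd_apply) metis
  qed
qed

lemma sat_pullback:
  assumes "wf_fm LN \<phi>"
  shows "\<exists>\<phi>'. wf_fm LM \<phi>' \<and> (\<forall>g. sat M (\<lambda>x. code (g x)) \<phi>' = sat N g \<phi>)"
proof -
  obtain \<phi>' where "wf_fm LM \<phi>'" "\<forall>e. range e \<subseteq> S \<longrightarrow> sat M e \<phi>' = sat N (\<lambda>x. decode (e x)) \<phi>"
    using definable_on_sat[OF assms] unfolding definable_on_def by blast
  then show ?thesis by (auto simp: code_in_S decode_code image_subset_iff)
qed

end

definition ict_pattern :: "('f, 'r, 'a) struc \<Rightarrow> (nat \<Rightarrow> ('f, 'r) fm) \<Rightarrow> ('f, 'r) fm \<Rightarrow> bool" where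
  "ict_pattern M \<theta> \<psi> \<longleftrightarrow>
     (\<forall>F :: (nat \<times> nat \<times> nat set \<times> nat set) set.
        finite F \<and> (\<forall>(i0, j0, I, J) \<in> F. finite I \<and> finite J) \<longrightarrow>
        (\<exists>(c :: nat \<Rightarrow> 'a) (b :: nat \<Rightarrow> nat \<Rightarrow> 'a).
           \<forall>(i0, j0, I, J) \<in> F. \<exists>a.
              sat M (c(0 := a)) (\<theta> i0) \<and> sat M ((b j0)(0 := a)) \<psi> \<and>
              (\<forall>i \<in> I - {i0}. \<not> sat M (c(0 := a)) (\<theta> i)) \<and>
              (\<forall>j \<in> J - {j0}. \<not> sat M ((b j)(0 := a)) \<psi>)))"

lemma dp_small_iff_no_ict_pattern:
  "dp_small L M \<longleftrightarrow> \<not> (\<exists>\<theta> \<psi>. (\<forall>i. wf_fm L (\<theta> i)) \<and> wf_fm L \<psi> \<and> ict_pattern M \<theta> \<psi>)"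
  unfolding dp_small_def ict_pattern_def by (rule refl)

lemma ict_pattern_pullback:
  fixes r :: "'b \<Rightarrow> 'a" and M :: "('f, 'r, 'a) struc" and N :: "('g, 's, 'b) struc"
  assumes \<theta>: "\<And>i g. sat M (\<lambda>x. r (g x)) (\<theta>' i) = sat N g (\<theta> i)"
    and \<psi>: "\<And>g. sat M (\<lambda>x. r (g x)) \<psi>' = sat N g \<psi>"
    and pattern: "ict_pattern N \<theta> \<psi>"
  shows "ict_pattern M \<theta>' \<psi>'"
  unfolding ict_pattern_def
proof (intro allI impI)
  fix F :: "(nat \<times> nat \<times> nat set \<times> nat set) set"
  assume "finite F \<and> (\<forall>(i0, j0, I, J) \<in> F. finite I \<and> finite J)"
  from mp[OF spec[OF pattern[unfolded ict_pattern_def], of F] this]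
  obtain c b where cb: "\<forall>(i0, j0, I, J) \<in> F. \<exists>a.
      sat N (c(0 := a)) (\<theta> i0) \<and> sat N ((b j0)(0 := a)) \<psi> \<and>
      (\<forall>i \<in> I - {i0}. \<not> sat N (c(0 := a)) (\<theta> i)) \<and>
      (\<forall>j \<in> J - {j0}. \<not> sat N ((b j)(0 := a)) \<psi>)"
    by (elim exE)
  have upd: "(\<lambda>x. r (g x))(0 := r a) = (\<lambda>x. r ((g(0 := a)) x))" for g a
    by auto
  have \<theta>_upd: "sat M ((\<lambda>x. r (g x))(0 := r a)) (\<theta>' i) = sat N (g(0 := a)) (\<theta> i)" for g a i
    by (simp only: upd \<theta>)
  have \<psi>_upd: "sat M ((\<lambda>x. r (g x))(0 := r a)) \<psi>' = sat N (g(0 := a)) \<psi>" for g a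
    by (simp only: upd \<psi>)
  show "\<exists>c b. \<forall>(i0, j0, I, J) \<in> F. \<exists>a.
      sat M (c(0 := a)) (\<theta>' i0) \<and> sat M ((b j0)(0 := a)) \<psi>' \<and>
      (\<forall>i \<in> I - {i0}. \<not> sat M (c(0 := a)) (\<theta>' i)) \<and>
      (\<forall>j \<in> J - {j0}. \<not> sat M ((b j)(0 := a)) \<psi>')"
  proof (intro exI[of _ "\<lambda>x. r (c x)"] exI[of _ "\<lambda>j x. r (b j x)"] ballI)
    fix q assume "q \<in> F"
    obtain i0 j0 I J where q: "q = (i0, j0, I, J)" by (cases q)
    from bspec[OF cb \<open>q \<in> F\<close>] obtain a where
      "sat N (c(0 := a)) (\<theta> i0) \<and> sat N ((b j0)(0 := a)) \<psi> \<and>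
       (\<forall>i \<in> I - {i0}. \<not> sat N (c(0 := a)) (\<theta> i)) \<and>
       (\<forall>j \<in> J - {j0}. \<not> sat N ((b j)(0 := a)) \<psi>)"
      unfolding q prod.case by (elim exE)
    then show "case q of (i0, j0, I, J) \<Rightarrow> \<exists>a.
        sat M ((\<lambda>x. r (c x))(0 := a)) (\<theta>' i0) \<and> sat M ((\<lambda>x. r (b j0 x))(0 := a)) \<psi>' \<and>
        (\<forall>i \<in> I - {i0}. \<not> sat M ((\<lambda>x. r (c x))(0 := a)) (\<theta>' i)) \<and>
        (\<forall>j \<in> J - {j0}. \<not> sat M ((\<lambda>x. r (b j x))(0 := a)) \<psi>')"
      unfolding q prod.case \<theta>_upd[symmetric] \<psi>_upd[symmetric] by (rule exI[of _ "r a"])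
  qed
qed

lemma dp_small_pullback:
  fixes r :: "'b \<Rightarrow> 'a" and M :: "('f, 'r, 'a) struc" and N :: "('g, 's, 'b) struc"
  assumes pullback: "\<And>\<phi>. wf_fm LN \<phi> \<Longrightarrow> \<exists>\<phi>'. wf_fm LM \<phi>' \<and> (\<forall>g. sat M (\<lambda>x. r (g x)) \<phi>' = sat N g \<phi>)"
    and "dp_small LM M"
  shows "dp_small LN N"
  unfolding dp_small_iff_no_ict_pattern
proof (intro notI, elim exE conjE)
  fix \<theta> \<psi> assume \<theta>: "\<forall>i. wf_fm LN (\<theta> i)" and \<psi>: "wf_fm LN \<psi>" and "ict_pattern N \<theta> \<psi>"
  from \<theta> pullback have "\<forall>i. \<exists>\<phi>'. wf_fm LM \<phi>' \<and> (\<forall>g. sat M (\<lambda>x. r (g x)) \<phi>' = sat N g (\<theta> i))"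
    by blast
  then obtain \<theta>' where \<theta>': "\<forall>i. wf_fm LM (\<theta>' i) \<and> (\<forall>g. sat M (\<lambda>x. r (g x)) (\<theta>' i) = sat N g (\<theta> i))"
    by (auto dest: choice)
  obtain \<psi>' where \<psi>': "wf_fm LM \<psi>'" "\<forall>g. sat M (\<lambda>x. r (g x)) \<psi>' = sat N g \<psi>"
    using pullback[OF \<psi>] by blast
  have "ict_pattern M \<theta>' \<psi>'"
    by (rule ict_pattern_pullback[where r = r]) (use \<theta>' \<psi>' \<open>ict_pattern N \<theta> \<psi>\<close> in auto)
  with \<theta>' \<psi>'(1) \<open>dp_small LM M\<close> show False
    unfolding dp_small_iff_no_ict_pattern by blast
qed

theorem lemma2p6:
  fixes LM :: "('f, 'r) lang" and M :: "('f, 'r, 'a) struc"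
    and LN :: "('g, 's) lang" and N :: "('g, 's, 'b) struc"
  assumes "simply_interprets0 LM M LN N"
    and "dp_small LM M"
  shows "dp_small LN N"
proof -
  have "\<exists>S E h. simple_interpretation LM M LN N S E h"
    using assms(1) unfolding simply_interprets0_def simple_interpretation_def by (simp only: conj_assoc)
  then obtain S E h where "simple_interpretation LM M LN N S E h" by blast
  then interpret simple_interpretation LM M LN N S E h .
  show ?thesis
    using dp_small_pullback[OF sat_pullback assms(2)] .
qed

end
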